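(* Let $a$ and $b$ be two disjoint finite groups of instances, each instance carrying a binary label, and let $\mathrm{p}^a$ and $\mathrm{p}^b$ be fixed orderings of the instances of $a$ and of $b$, respectively. Assume $n_1^a,n_0^a,n_1^b,n_0^b\ge 1$. Then: (i) there exists a cross-group ordering $o$ of $(\mathrm{p}^a,\mathrm{p}^b)$ with $\Delta\mathrm{URF}^o \le \min(1/n^a,\,1/n^b)$; (ii) there exists a cross-group ordering $o$ with $\Delta\mathrm{xAUC}^o \le \min\big(\max(1/n_1^b,1/n_0^b),\ \max(1/n_1^a,1/n_0^a)\big)$; (iii) there exists a cross-group ordering $o$ with $\Delta\mathrm{PRF}^o \le \min\big(\max(n_0^b/(n_1^a n_0),\,1/n_0),\ \max(n_0^a/(n_1^b n_0),\,1/n_0)\big)$.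
   Context: Each instance $u$ has a label $Y_u\in\{0,1\}$. For a group $g\in\{a,b\}$: $n^g$ is the number of instances in $g$, $n^g_1$ the number with label 1, $n^g_0$ the number with label 0; $n_1=n_1^a+n_1^b$, $n_0=n_0^a+n_0^b$. A cross-group ordering $o$ of $(\mathrm{p}^a,\mathrm{p}^b)$ is a total order (a list) of all instances of $a\cup b$ in which the instances of $a$ appear in the same relative order as in $\mathrm{p}^a$ and the instances of $b$ in the same relative order as in $\mathrm{p}^b$. "$u$ precedes $v$ in $o$" means $u$ is ranked above $v$. Metrics induced by $o$: $\mathrm{xAUC}^o(a,b)=\frac{1}{n_1^a n_0^b}\#\{(u,v): u\in a, Y_u=1, v\in b, Y_v=0, u \text{ precedes } v\}$, and $\mathrm{xAUC}^o(b,a)$ symmetrically; $\Delta\mathrm{xAUC}^o=|\mathrm{xAUC}^o(a,b)-\mathrm{xAUC}^o(b,a)|$. $\Delta\mathrm{URF}^o=\frac{1}{n^a n^b}\big|\#\{(u,v):u\in a,v\in b,u\text{ precedes }v\}-\#\{(u,v):u\in a,v\in b,v\text{ precedes }u\}\big|$. $\mathrm{PRF}^o(a)=\frac{1}{n_1^a n_0}\#\{(u,v): u\in a, Y_u=1, Y_v=0, u\text{ precedes } v\}$ (with $v$ ranging over negatives of both groups), $\mathrm{PRF}^o(b)$ symmetrically; $\Delta\mathrm{PRF}^o=|\mathrm{PRF}^o(a)-\mathrm{PRF}^o(b)|$. *)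

theory Defs
  imports Complex_Main
begin

text \<open>Instances are elements of a type 'i; a group is given by its fixed ordering,
a distinct list (head = top-ranked). Labels are Y :: 'i => bool (True = label 1).\<close>

definition precedes :: "'i list \<Rightarrow> 'i \<Rightarrow> 'i \<Rightarrow> bool" where
  "precedes ord u v \<longleftrightarrow> (\<exists>i j. i < j \<and> j < length ord \<and> ord ! i = u \<and> ord ! j = v)"

definition cross_group_ordering :: "'i list \<Rightarrow> 'i list \<Rightarrow> 'i list \<Rightarrow> bool" where
  "cross_group_ordering pa pb ord \<longleftrightarrow> ord \<in> shuffles pa pb"

definition npos :: "('i \<Rightarrow> bool) \<Rightarrow> 'i list \<Rightarrow> nat" where
  "npos Y p = card {u \<in> set p. Y u}"

definition nneg :: "('i \<Rightarrow> bool) \<Rightarrow> 'i list \<Rightarrow> nat" where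
  "nneg Y p = card {u \<in> set p. \<not> Y u}"

definition xAUC :: "('i \<Rightarrow> bool) \<Rightarrow> 'i list \<Rightarrow> 'i list \<Rightarrow> 'i list \<Rightarrow> real" where
  "xAUC Y ord pa pb =
     real (card {(u, v). u \<in> set pa \<and> Y u \<and> v \<in> set pb \<and> \<not> Y v \<and> precedes ord u v})
     / (real (npos Y pa) * real (nneg Y pb))"

definition delta_xAUC :: "('i \<Rightarrow> bool) \<Rightarrow> 'i list \<Rightarrow> 'i list \<Rightarrow> 'i list \<Rightarrow> real" where
  "delta_xAUC Y ord pa pb = \<bar>xAUC Y ord pa pb - xAUC Y ord pb pa\<bar>"

definition delta_URF :: "'i list \<Rightarrow> 'i list \<Rightarrow> 'i list \<Rightarrow> real" where
  "delta_URF ord pa pb =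
     \<bar>real (card {(u, v). u \<in> set pa \<and> v \<in> set pb \<and> precedes ord u v})
      - real (card {(u, v). u \<in> set pa \<and> v \<in> set pb \<and> precedes ord v u})\<bar>
     / (real (length pa) * real (length pb))"

definition PRF :: "('i \<Rightarrow> bool) \<Rightarrow> 'i list \<Rightarrow> 'i list \<Rightarrow> 'i list \<Rightarrow> real" where
  "PRF Y ord pa pb =
     real (card {(u, v). u \<in> set pa \<and> Y u \<and> v \<in> set pa \<union> set pb \<and> \<not> Y v \<and> precedes ord u v})
     / (real (npos Y pa) * real (nneg Y pa + nneg Y pb))"

definition delta_PRF :: "('i \<Rightarrow> bool) \<Rightarrow> 'i list \<Rightarrow> 'i list \<Rightarrow> 'i list \<Rightarrow> real" where
  "delta_PRF Y ord pa pb = \<bar>PRF Y ord pa pb - PRF Y ord pb pa\<bar>"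

end

theory Submission
  imports Defs
begin

(* Walk from the ordering pb @ pa to pa @ pb by adjacent transpositions, each moving an
   instance of a above an instance of b; every list on the way is a cross-group ordering.
   Each disparity is |g| for a signed weighted difference g of pair counts with g <= 0 at
   pb @ pa and g >= 0 at pa @ pb.  A transposition changes the relative order of the swapped
   pair only, so it raises g by at most the weight of that pair, and a discrete intermediate
   value argument gives an ordering on the walk where |g| is at most that weight. *)

lemma precedes_Nil [simp]: "\<not> precedes [] u v"
  by (simp add: precedes_def)

lemma precedes_Cons [simp]:
  "precedes (x # xs) u v \<longleftrightarrow> u = x \<and> v \<in> set xs \<or> precedes xs u v"
proof
  assume "precedes (x # xs) u v"
  then obtain i j where "i < j" "j < Suc (length xs)" "(x # xs) ! i = u" "(x # xs) ! j = v"
    unfolding precedes_def by auto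
  then show "u = x \<and> v \<in> set xs \<or> precedes xs u v"
    unfolding precedes_def by (cases i; cases j) (auto simp: in_set_conv_nth)
next
  assume "u = x \<and> v \<in> set xs \<or> precedes xs u v"
  then show "precedes (x # xs) u v"
    unfolding precedes_def
    by (auto simp: in_set_conv_nth) (metis Suc_less_eq nth_Cons_Suc zero_less_Suc nth_Cons_0)+
qed

lemma precedes_append:
  "precedes (xs @ ys) u v \<longleftrightarrow> precedes xs u v \<or> precedes ys u v \<or> u \<in> set xs \<and> v \<in> set ys"
  by (induction xs) auto

lemma precedes_in_set: "precedes xs u v \<Longrightarrow> u \<in> set xs \<and> v \<in> set xs"
  by (induction xs) auto

lemma not_precedes_suffix_prefix:
  "set xs \<inter> set ys = {} \<Longrightarrow> u \<in> set xs \<Longrightarrow> v \<in> set ys \<Longrightarrow> \<not> precedes (xs @ ys) v u"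
  by (auto simp: precedes_append dest: precedes_in_set)

lemma precedes_swap_adjacent:
  "precedes (xs @ u # v # ys) p q \<Longrightarrow> (p, q) \<noteq> (u, v) \<Longrightarrow> precedes (xs @ v # u # ys) p q"
  by (auto simp: precedes_append)

definition ranked_pairs :: "('i \<Rightarrow> 'i \<Rightarrow> bool) \<Rightarrow> 'i list \<Rightarrow> ('i \<times> 'i) set" where
  "ranked_pairs Q ord = {(u, v). Q u v \<and> precedes ord u v}"

lemma finite_ranked_pairs [simp]: "finite (ranked_pairs Q ord)"
proof (rule finite_subset)
  show "ranked_pairs Q ord \<subseteq> set ord \<times> set ord"
    by (auto simp: ranked_pairs_def dest: precedes_in_set)
qed simp

lemma card_ranked_pairs_swap_adjacent:
  "card (ranked_pairs Q (xs @ u # v # ys)) \<le> card (ranked_pairs Q (xs @ v # u # ys)) + of_bool (Q u v)"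
proof -
  let ?R = "ranked_pairs Q (xs @ v # u # ys)"
  have "ranked_pairs Q (xs @ u # v # ys) \<subseteq> (if Q u v then insert (u, v) ?R else ?R)"
    by (auto simp: ranked_pairs_def dest: precedes_swap_adjacent)
  then have "card (ranked_pairs Q (xs @ u # v # ys)) \<le> card (if Q u v then insert (u, v) ?R else ?R)"
    by (intro card_mono) auto
  then show ?thesis by (auto simp: card_insert_if split: if_splits)
qed

lemma append_in_shuffles_right: "zs \<in> shuffles xs ys \<Longrightarrow> ws @ zs \<in> shuffles xs (ws @ ys)"
  by (induction ws) (auto intro: Cons_in_shuffles_rightI)

lemma small_value_moving_to_front:
  fixes g :: "'a list \<Rightarrow> real"
  assumes "g (ys @ [a]) \<le> 0" "0 \<le> g (a # ys)" "0 \<le> d" "a \<in> A" "set ys \<subseteq> B"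
    and "\<And>xs u v zs. u \<in> A \<Longrightarrow> v \<in> B \<Longrightarrow> g (xs @ u # v # zs) \<le> g (xs @ v # u # zs) + d"
  shows "\<exists>ys1 ys2. ys = ys1 @ ys2 \<and> \<bar>g (ys1 @ a # ys2)\<bar> \<le> d"
  using assms
proof (induction ys arbitrary: g)
  case Nil
  then show ?case by auto
next
  case (Cons y ys)
  show ?case
  proof (cases "0 \<le> g (y # a # ys)")
    case True
    have "\<exists>ys1 ys2. ys = ys1 @ ys2 \<and> \<bar>g (y # ys1 @ a # ys2)\<bar> \<le> d"
    proof (rule Cons.IH)
      show "g (y # xs @ u # v # zs) \<le> g (y # xs @ v # u # zs) + d" if "u \<in> A" "v \<in> B" for xs u v zs
        using Cons.prems(6)[of u v "y # xs"] that by simp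
    qed (use Cons.prems True in auto)
    then show ?thesis by (metis append_Cons)
  next
    case False
    have "g (a # y # ys) \<le> g (y # a # ys) + d"
      using Cons.prems(6)[of a y "[]"] Cons.prems(4,5) by simp
    then have "\<bar>g ([] @ a # y # ys)\<bar> \<le> d" using False Cons.prems(2) by simp
    then show ?thesis by blast
  qed
qed

lemma small_value_on_shuffles:
  fixes g :: "'a list \<Rightarrow> real"
  assumes "g (pb @ pa) \<le> 0" "0 \<le> g (pa @ pb)" "0 \<le> d" "set pa \<subseteq> A" "set pb \<subseteq> B"
    and "\<And>xs u v zs. u \<in> A \<Longrightarrow> v \<in> B \<Longrightarrow> g (xs @ u # v # zs) \<le> g (xs @ v # u # zs) + d"
  shows "\<exists>ord \<in> shuffles pa pb. \<bar>g ord\<bar> \<le> d"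
  using assms
proof (induction pa arbitrary: g)
  case Nil
  then show ?case by auto
next
  case (Cons a pa)
  show ?case
  proof (cases "0 \<le> g (a # pb @ pa)")
    case True
    have "\<exists>ys1 ys2. pb = ys1 @ ys2 \<and> \<bar>g ((ys1 @ a # ys2) @ pa)\<bar> \<le> d"
    proof (rule small_value_moving_to_front[where g = "\<lambda>ord. g (ord @ pa)"])
      show "g ((xs @ u # v # zs) @ pa) \<le> g ((xs @ v # u # zs) @ pa) + d" if "u \<in> A" "v \<in> B" for xs u v zs
        using Cons.prems(6)[of u v xs "zs @ pa"] that by simp
    qed (use Cons.prems True in auto)
    then obtain ys1 ys2 where "pb = ys1 @ ys2" "\<bar>g (ys1 @ a # ys2 @ pa)\<bar> \<le> d" by auto
    moreover have "ys1 @ a # ys2 @ pa \<in> shuffles (a # pa) (ys1 @ ys2)"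
      using append_in_shuffles_right[of pa pa "[]" ys2]
      by (intro append_in_shuffles_right Cons_in_shuffles_leftI) simp
    ultimately show ?thesis by auto
  next
    case False
    have "\<exists>ord \<in> shuffles pa pb. \<bar>g (a # ord)\<bar> \<le> d"
    proof (rule Cons.IH)
      show "g (a # xs @ u # v # zs) \<le> g (a # xs @ v # u # zs) + d" if "u \<in> A" "v \<in> B" for xs u v zs
        using Cons.prems(6)[of u v "a # xs"] that by simp
    qed (use Cons.prems False in auto)
    then show ?thesis by (auto intro: Cons_in_shuffles_leftI)
  qed
qed

lemma exists_shuffle_balancing_ranked_pairs:
  fixes c1 c2 d :: real
  assumes "0 \<le> c1" "0 \<le> c2" "0 \<le> d"
    and "c1 * card (ranked_pairs Q1 (pb @ pa)) \<le> c2 * card (ranked_pairs Q2 (pb @ pa))"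
    and "c2 * card (ranked_pairs Q2 (pa @ pb)) \<le> c1 * card (ranked_pairs Q1 (pa @ pb))"
    and "\<And>u v. u \<in> set pa \<Longrightarrow> v \<in> set pb \<Longrightarrow> c1 * of_bool (Q1 u v) + c2 * of_bool (Q2 v u) \<le> d"
  shows "\<exists>ord \<in> shuffles pa pb.
           \<bar>c1 * card (ranked_pairs Q1 ord) - c2 * card (ranked_pairs Q2 ord)\<bar> \<le> d"
proof (rule small_value_on_shuffles[where A = "set pa" and B = "set pb"])
  fix xs u v zs assume uv: "u \<in> set pa" "v \<in> set pb"
  let ?x = "xs @ u # v # zs" and ?y = "xs @ v # u # zs"
  have Q1_step: "real (card (ranked_pairs Q1 ?x)) \<le> card (ranked_pairs Q1 ?y) + of_bool (Q1 u v)"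
    using card_ranked_pairs_swap_adjacent[of Q1 xs u v zs] by linarith
  have 1: "c1 * card (ranked_pairs Q1 ?x) \<le> c1 * card (ranked_pairs Q1 ?y) + c1 * of_bool (Q1 u v)"
    using mult_left_mono[OF Q1_step assms(1)] by (simp add: distrib_left)
  have Q2_step: "real (card (ranked_pairs Q2 ?y)) \<le> card (ranked_pairs Q2 ?x) + of_bool (Q2 v u)"
    using card_ranked_pairs_swap_adjacent[of Q2 xs v u zs] by linarith
  have 2: "c2 * card (ranked_pairs Q2 ?y) \<le> c2 * card (ranked_pairs Q2 ?x) + c2 * of_bool (Q2 v u)"
    using mult_left_mono[OF Q2_step assms(2)] by (simp add: distrib_left)
  show "c1 * card (ranked_pairs Q1 ?x) - c2 * card (ranked_pairs Q2 ?x)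
        \<le> c1 * card (ranked_pairs Q1 ?y) - c2 * card (ranked_pairs Q2 ?y) + d"
    using 1 2 assms(6)[OF uv] by linarith
qed (use assms(3-5) in simp_all)

lemma card_pairs_ranked_below:
  "card {(u, v). Q u v \<and> precedes ord v u} = card (ranked_pairs (\<lambda>v u. Q u v) ord)"
proof -
  have "{(u, v). Q u v \<and> precedes ord v u} = prod.swap ` ranked_pairs (\<lambda>v u. Q u v) ord"
    by (auto simp: ranked_pairs_def)
  then show ?thesis by (simp add: card_image)
qed

lemma divide_mult_le_min_inverse:
  fixes c x y :: real
  assumes "0 < c" "c \<le> x" "c \<le> y"
  shows "c / (x * y) \<le> min (1 / x) (1 / y)"
proof -
  have "(c / y) / x \<le> 1 / x"
    by (rule divide_right_mono) (use assms in simp_all)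
  moreover have "(c / x) / y \<le> 1 / y"
    by (rule divide_right_mono) (use assms in simp_all)
  ultimately show ?thesis by (simp add: mult.commute)
qed

lemma exists_shuffle_delta_URF_le:
  assumes "set pa \<inter> set pb = {}" "2 \<le> length pa" "2 \<le> length pb"
  shows "\<exists>ord. cross_group_ordering pa pb ord \<and>
           delta_URF ord pa pb \<le> min (1 / real (length pa)) (1 / real (length pb))"
proof -
  define Q where "Q u v \<longleftrightarrow> u \<in> set pa \<and> v \<in> set pb" for u v
  have "ranked_pairs Q (pb @ pa) = {}" "ranked_pairs (\<lambda>v u. Q u v) (pa @ pb) = {}"
    using assms(1) not_precedes_suffix_prefix by (fastforce simp: ranked_pairs_def Q_def)+
  then have "\<exists>ord \<in> shuffles pa pb.
      \<bar>1 * real (card (ranked_pairs Q ord)) - 1 * real (card (ranked_pairs (\<lambda>v u. Q u v) ord))\<bar> \<le> 2"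
    by (intro exists_shuffle_balancing_ranked_pairs) simp_all
  then obtain ord where ord: "ord \<in> shuffles pa pb"
    and bal: "\<bar>real (card (ranked_pairs Q ord)) - card (ranked_pairs (\<lambda>v u. Q u v) ord)\<bar> \<le> 2"
    by auto
  have "{(u, v). u \<in> set pa \<and> v \<in> set pb \<and> precedes ord u v} = ranked_pairs Q ord"
    by (auto simp: ranked_pairs_def Q_def)
  moreover have "card {(u, v). u \<in> set pa \<and> v \<in> set pb \<and> precedes ord v u}
      = card (ranked_pairs (\<lambda>v u. Q u v) ord)"
    using card_pairs_ranked_below[of Q ord] by (simp add: Q_def conj_assoc)
  ultimately have "delta_URF ord pa pb
        = \<bar>real (card (ranked_pairs Q ord)) - card (ranked_pairs (\<lambda>v u. Q u v) ord)\<bar>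
          / (real (length pa) * real (length pb))"
    by (simp add: delta_URF_def)
  also have "\<dots> \<le> 2 / (real (length pa) * real (length pb))"
    using bal by (intro divide_right_mono) simp_all
  also have "\<dots> \<le> min (1 / real (length pa)) (1 / real (length pb))"
    using assms(2,3) by (intro divide_mult_le_min_inverse) simp_all
  finally show ?thesis
    using ord unfolding cross_group_ordering_def by (intro exI[of _ ord]) simp
qed

definition pos_neg_pair :: "('i \<Rightarrow> bool) \<Rightarrow> 'i set \<Rightarrow> 'i set \<Rightarrow> 'i \<Rightarrow> 'i \<Rightarrow> bool" where
  "pos_neg_pair Y A B u v \<longleftrightarrow> u \<in> A \<and> Y u \<and> v \<in> B \<and> \<not> Y v"

lemma xAUC_eq_card_ranked_pairs:
  "xAUC Y ord pa pb = card (ranked_pairs (pos_neg_pair Y (set pa) (set pb)) ord)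
     / (real (npos Y pa) * real (nneg Y pb))"
  by (simp add: xAUC_def ranked_pairs_def pos_neg_pair_def conj_assoc)

lemma PRF_eq_card_ranked_pairs:
  "PRF Y ord pa pb = card (ranked_pairs (pos_neg_pair Y (set pa) (set pa \<union> set pb)) ord)
     / (real (npos Y pa) * real (nneg Y pa + nneg Y pb))"
  by (simp add: PRF_def ranked_pairs_def pos_neg_pair_def conj_assoc)

lemma weighted_pos_neg_pairs_le_max:
  fixes c1 c2 :: real
  assumes "0 \<le> c1" "0 \<le> c2"
  shows "c1 * of_bool (pos_neg_pair Y A B u v) + c2 * of_bool (pos_neg_pair Y A' B' v u) \<le> max c1 c2"
  using assms by (auto simp: pos_neg_pair_def)

lemma npos_mul_nneg_le_card_ranked_pairs:
  "npos Y xs * nneg Y ys \<le> card (ranked_pairs (pos_neg_pair Y (set xs) (set xs \<union> set ys)) (xs @ ys))"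
proof -
  have "{u \<in> set xs. Y u} \<times> {v \<in> set ys. \<not> Y v}
      \<subseteq> ranked_pairs (pos_neg_pair Y (set xs) (set xs \<union> set ys)) (xs @ ys)"
    by (auto simp: ranked_pairs_def pos_neg_pair_def precedes_append)
  then have "card ({u \<in> set xs. Y u} \<times> {v \<in> set ys. \<not> Y v})
      \<le> card (ranked_pairs (pos_neg_pair Y (set xs) (set xs \<union> set ys)) (xs @ ys))"
    by (intro card_mono) simp_all
  then show ?thesis by (simp add: npos_def nneg_def card_cartesian_product)
qed

lemma card_ranked_pairs_le_npos_mul_nneg:
  assumes "set xs \<inter> set ys = {}"
  shows "card (ranked_pairs (pos_neg_pair Y (set ys) (set ys \<union> set xs)) (xs @ ys)) \<le> npos Y ys * nneg Y ys"
proof -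
  have "ranked_pairs (pos_neg_pair Y (set ys) (set ys \<union> set xs)) (xs @ ys)
      \<subseteq> {u \<in> set ys. Y u} \<times> {v \<in> set ys. \<not> Y v}"
    using assms by (auto simp: ranked_pairs_def pos_neg_pair_def precedes_append dest: precedes_in_set)
  then have "card (ranked_pairs (pos_neg_pair Y (set ys) (set ys \<union> set xs)) (xs @ ys))
      \<le> card ({u \<in> set ys. Y u} \<times> {v \<in> set ys. \<not> Y v})"
    by (intro card_mono) simp_all
  then show ?thesis by (simp add: npos_def nneg_def card_cartesian_product)
qed

lemma card_ranked_pos_neg_pairs_append_le:
  fixes n :: real
  assumes "set xs \<inter> set ys = {}" "npos Y xs \<ge> 1" "npos Y ys \<ge> 1" "0 \<le> n"
  shows "card (ranked_pairs (pos_neg_pair Y (set ys) (set ys \<union> set xs)) (xs @ ys)) / (npos Y ys * n)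
       \<le> card (ranked_pairs (pos_neg_pair Y (set xs) (set xs \<union> set ys)) (xs @ ys)) / (npos Y xs * n)"
proof -
  have "card (ranked_pairs (pos_neg_pair Y (set ys) (set ys \<union> set xs)) (xs @ ys)) / (npos Y ys * n)
      \<le> real (npos Y ys * nneg Y ys) / (npos Y ys * n)"
    using card_ranked_pairs_le_npos_mul_nneg[OF assms(1)] assms(4)
    by (intro divide_right_mono) (simp_all del: of_nat_mult)
  also have "\<dots> = real (npos Y xs * nneg Y ys) / (npos Y xs * n)"
    using assms(2,3) by simp
  also have "\<dots> \<le> card (ranked_pairs (pos_neg_pair Y (set xs) (set xs \<union> set ys)) (xs @ ys)) / (npos Y xs * n)"
    using npos_mul_nneg_le_card_ranked_pairs assms(4)
    by (intro divide_right_mono) (simp_all del: of_nat_mult)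
  finally show ?thesis .
qed

lemma exists_shuffle_delta_xAUC_le:
  assumes "set pa \<inter> set pb = {}"
    and "npos Y pa \<ge> 1" "nneg Y pa \<ge> 1" "npos Y pb \<ge> 1" "nneg Y pb \<ge> 1"
  shows "\<exists>ord. cross_group_ordering pa pb ord \<and>
           delta_xAUC Y ord pa pb \<le>
             min (max (1 / real (npos Y pb)) (1 / real (nneg Y pb)))
                 (max (1 / real (npos Y pa)) (1 / real (nneg Y pa)))"
proof -
  define c1 where "c1 = 1 / (real (npos Y pa) * real (nneg Y pb))"
  define c2 where "c2 = 1 / (real (npos Y pb) * real (nneg Y pa))"
  let ?Qa = "pos_neg_pair Y (set pa) (set pb)" and ?Qb = "pos_neg_pair Y (set pb) (set pa)"
  have "ranked_pairs ?Qa (pb @ pa) = {}" "ranked_pairs ?Qb (pa @ pb) = {}"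
    using assms(1) not_precedes_suffix_prefix
    by (fastforce simp: ranked_pairs_def pos_neg_pair_def)+
  then have "\<exists>ord \<in> shuffles pa pb.
      \<bar>c1 * card (ranked_pairs ?Qa ord) - c2 * card (ranked_pairs ?Qb ord)\<bar> \<le> max c1 c2"
    by (intro exists_shuffle_balancing_ranked_pairs weighted_pos_neg_pairs_le_max)
      (simp_all add: c1_def c2_def le_max_iff_disj)
  then obtain ord where ord: "ord \<in> shuffles pa pb"
    and bal: "\<bar>c1 * card (ranked_pairs ?Qa ord) - c2 * card (ranked_pairs ?Qb ord)\<bar> \<le> max c1 c2"
    by blast
  have c_le: "c1 \<le> min (1 / real (npos Y pa)) (1 / real (nneg Y pb))"
    "c2 \<le> min (1 / real (npos Y pb)) (1 / real (nneg Y pa))"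
    unfolding c1_def c2_def using assms(2-5) by (intro divide_mult_le_min_inverse; simp)+
  have "delta_xAUC Y ord pa pb
      = \<bar>c1 * card (ranked_pairs ?Qa ord) - c2 * card (ranked_pairs ?Qb ord)\<bar>"
    by (simp add: delta_xAUC_def xAUC_eq_card_ranked_pairs c1_def c2_def)
  also have "\<dots> \<le> max c1 c2" by (rule bal)
  also have "\<dots> \<le> min (max (1 / real (npos Y pb)) (1 / real (nneg Y pb)))
                      (max (1 / real (npos Y pa)) (1 / real (nneg Y pa)))"
    using c_le by (intro max.boundedI min.boundedI) (auto simp: le_max_iff_disj)
  finally show ?thesis
    using ord unfolding cross_group_ordering_def by (intro exI[of _ ord]) simp
qed

lemma exists_shuffle_delta_PRF_le:
  assumes "set pa \<inter> set pb = {}"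
    and "npos Y pa \<ge> 1" "nneg Y pa \<ge> 1" "npos Y pb \<ge> 1" "nneg Y pb \<ge> 1"
  shows "\<exists>ord. cross_group_ordering pa pb ord \<and>
           delta_PRF Y ord pa pb \<le>
             min (max (real (nneg Y pb) / (real (npos Y pa) * real (nneg Y pa + nneg Y pb)))
                      (1 / real (nneg Y pa + nneg Y pb)))
                 (max (real (nneg Y pa) / (real (npos Y pb) * real (nneg Y pa + nneg Y pb)))
                      (1 / real (nneg Y pa + nneg Y pb)))"
proof -
  define n0 where "n0 = real (nneg Y pa + nneg Y pb)"
  define c1 where "c1 = 1 / (real (npos Y pa) * n0)"
  define c2 where "c2 = 1 / (real (npos Y pb) * n0)"
  let ?Qa = "pos_neg_pair Y (set pa) (set pa \<union> set pb)"
    and ?Qb = "pos_neg_pair Y (set pb) (set pb \<union> set pa)"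
  have disjoint': "set pb \<inter> set pa = {}" using assms(1) by blast
  have n0: "n0 \<ge> 1" using assms(3) by (simp add: n0_def)
  have c: "0 \<le> c1" "0 \<le> c2" by (simp_all add: c1_def c2_def n0_def)
  have "c1 * card (ranked_pairs ?Qa (pb @ pa)) \<le> c2 * card (ranked_pairs ?Qb (pb @ pa))"
    "c2 * card (ranked_pairs ?Qb (pa @ pb)) \<le> c1 * card (ranked_pairs ?Qa (pa @ pb))"
    using card_ranked_pos_neg_pairs_append_le[OF disjoint' assms(4,2), of n0]
      card_ranked_pos_neg_pairs_append_le[OF assms(1,2,4), of n0] n0
    by (simp_all add: c1_def c2_def)
  with c have "\<exists>ord \<in> shuffles pa pb.
      \<bar>c1 * card (ranked_pairs ?Qa ord) - c2 * card (ranked_pairs ?Qb ord)\<bar> \<le> max c1 c2"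
    by (intro exists_shuffle_balancing_ranked_pairs weighted_pos_neg_pairs_le_max)
      (simp_all add: le_max_iff_disj)
  then obtain ord where ord: "ord \<in> shuffles pa pb"
    and bal: "\<bar>c1 * card (ranked_pairs ?Qa ord) - c2 * card (ranked_pairs ?Qb ord)\<bar> \<le> max c1 c2"
    by blast
  have c_le: "c1 \<le> 1 / n0" "c2 \<le> 1 / n0"
    unfolding c1_def c2_def using assms(2,4) n0
    by (simp_all add: divide_mult_le_min_inverse[of 1, simplified])
  have "delta_PRF Y ord pa pb
      = \<bar>c1 * card (ranked_pairs ?Qa ord) - c2 * card (ranked_pairs ?Qb ord)\<bar>"
    by (simp add: delta_PRF_def PRF_eq_card_ranked_pairs c1_def c2_def n0_def add.commute)
  also have "\<dots> \<le> max c1 c2" by (rule bal)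
  also have "\<dots> \<le> 1 / n0" using c_le by simp
  also have "\<dots> \<le> min (max (real (nneg Y pb) / (real (npos Y pa) * real (nneg Y pa + nneg Y pb)))
                          (1 / real (nneg Y pa + nneg Y pb)))
                      (max (real (nneg Y pa) / (real (npos Y pb) * real (nneg Y pa + nneg Y pb)))
                          (1 / real (nneg Y pa + nneg Y pb)))"
    by (simp add: n0_def)
  finally show ?thesis
    using ord unfolding cross_group_ordering_def by (intro exI[of _ ord]) simp
qed

lemma npos_add_nneg_le_length: "npos Y p + nneg Y p \<le> length p"
proof -
  have "npos Y p + nneg Y p = card ({u \<in> set p. Y u} \<union> {u \<in> set p. \<not> Y u})"
    unfolding npos_def nneg_def by (rule card_Un_disjoint[symmetric]) auto
  also have "{u \<in> set p. Y u} \<union> {u \<in> set p. \<not> Y u} = set p" by auto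
  finally show ?thesis using card_length[of p] by simp
qed

theorem proposition1:
  fixes pa pb :: "'i list" and Y :: "'i \<Rightarrow> bool"
  assumes "distinct pa" and "distinct pb" and "set pa \<inter> set pb = {}"
    and "npos Y pa \<ge> 1" and "nneg Y pa \<ge> 1" and "npos Y pb \<ge> 1" and "nneg Y pb \<ge> 1"
  shows "(\<exists>ord. cross_group_ordering pa pb ord \<and>
            delta_URF ord pa pb \<le> min (1 / real (length pa)) (1 / real (length pb)))
       \<and> (\<exists>ord. cross_group_ordering pa pb ord \<and>
            delta_xAUC Y ord pa pb \<le>
              min (max (1 / real (npos Y pb)) (1 / real (nneg Y pb)))
                  (max (1 / real (npos Y pa)) (1 / real (nneg Y pa))))
       \<and> (\<exists>ord. cross_group_ordering pa pb ord \<and>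
            delta_PRF Y ord pa pb \<le>
              min (max (real (nneg Y pb) / (real (npos Y pa) * real (nneg Y pa + nneg Y pb)))
                       (1 / real (nneg Y pa + nneg Y pb)))
                  (max (real (nneg Y pa) / (real (npos Y pb) * real (nneg Y pa + nneg Y pb)))
                       (1 / real (nneg Y pa + nneg Y pb))))"
proof -
  have "2 \<le> length pa" "2 \<le> length pb"
    using npos_add_nneg_le_length[of Y pa] npos_add_nneg_le_length[of Y pb] assms(4-7)
    by linarith+
  then show ?thesis
    by (intro conjI exists_shuffle_delta_URF_le exists_shuffle_delta_xAUC_le[OF assms(3-7)]
        exists_shuffle_delta_PRF_le[OF assms(3-7)] assms(3))
qed

end
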